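(* Let $\mathcal M$ be a matroid on a finite ground set $V$ with $|V|=n$ and $\zeta(\mathcal M)=\zeta$, and let $g$ be a positive integer with $g\le\frac{n}{\zeta}$. Then $\zeta(\mathcal M^g)=\frac{n}{g}$, where $\mathcal M^g=\{A\in\mathcal M: |A|\le g\}$.
   Context: A simplicial complex $\mathcal C$ on ground set $V(\mathcal C)$ is a family of subsets closed under taking subsets. A matroid is a complex in which, for every subset $W$ of the ground set, all maximal members contained in $W$ have the same size. For a complex $\mathcal C$, $\mathrm{rank}(\mathcal C)$ is the maximal size of a member, $\mathcal C[S]$ is the set of members of $\mathcal C$ contained in $S$, and $\zeta(\mathcal C)=\max_{S\subseteq V(\mathcal C)}\frac{|S|}{\mathrm{rank}(\mathcal C[S])}$ (over nonempty $S$). The complex $\mathcal M^g$ is regarded as a complex on the same ground set $V$. *)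

theory Defs
  imports Complex_Main "HOL-Library.Extended_Real"
begin

definition simplicial_complex :: "'a set \<Rightarrow> 'a set set \<Rightarrow> bool" where
  "simplicial_complex V C \<longleftrightarrow> C \<noteq> {} \<and> (\<forall>A\<in>C. A \<subseteq> V) \<and> (\<forall>A\<in>C. \<forall>B. B \<subseteq> A \<longrightarrow> B \<in> C)"

definition maximal_in :: "'a set set \<Rightarrow> 'a set \<Rightarrow> 'a set \<Rightarrow> bool" where
  "maximal_in C W A \<longleftrightarrow> A \<in> C \<and> A \<subseteq> W \<and> (\<forall>B\<in>C. A \<subseteq> B \<and> B \<subseteq> W \<longrightarrow> B = A)"

definition matroid :: "'a set \<Rightarrow> 'a set set \<Rightarrow> bool" where
  "matroid V C \<longleftrightarrow> simplicial_complex V C \<and>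
     (\<forall>W. W \<subseteq> V \<longrightarrow> (\<forall>A B. maximal_in C W A \<and> maximal_in C W B \<longrightarrow> card A = card B))"

definition restr :: "'a set set \<Rightarrow> 'a set \<Rightarrow> 'a set set" where
  "restr C S = {A \<in> C. A \<subseteq> S}"

definition cx_rank :: "'a set set \<Rightarrow> nat" where
  "cx_rank C = Max (card ` C)"

text \<open>zeta, valued in extended reals: |S| / 0 = \<infinity> for nonempty S.\<close>
definition zeta :: "'a set \<Rightarrow> 'a set set \<Rightarrow> ereal" where
  "zeta V C = (SUP S \<in> {S. S \<subseteq> V \<and> S \<noteq> {}}. ereal (real (card S)) / ereal (real (cx_rank (restr C S))))"

definition trunc :: "'a set set \<Rightarrow> nat \<Rightarrow> 'a set set" where
  "trunc C g = {A \<in> C. card A \<le> g}"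


end

theory Submission
  imports Defs
begin

text \<open>Truncating a complex at size g caps the rank of every restriction at g, so the ratio
  |S| / rank of M^g[S] is either the old ratio (at most \<zeta> \<le> n/g) or |S|/g \<le> n/g. The bound n/g
  is attained at S = V because g \<le> n/\<zeta> \<le> rank M.\<close>

lemma cx_rank_restr_trunc:
  assumes "finite V" and "simplicial_complex V C" and "S \<subseteq> V"
  shows "cx_rank (restr (trunc C g) S) = min (cx_rank (restr C S)) g"
proof -
  have fin: "finite (restr C S)"
    by (rule finite_subset[of _ "Pow V"]) (use assms in \<open>auto simp: restr_def simplicial_complex_def\<close>)
  have "{} \<in> restr C S"
    using assms(2) by (auto simp: restr_def simplicial_complex_def)
  then have "cx_rank (restr C S) \<in> card ` restr C S"
    unfolding cx_rank_def using fin by (intro Max_in) auto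
  then obtain A where A: "A \<in> restr C S" "card A = cx_rank (restr C S)"
    by auto
  obtain B where B: "B \<subseteq> A" "card B = min (cx_rank (restr C S)) g"
    using obtain_subset_with_card_n[of "min (cx_rank (restr C S)) g" A] A(2) by auto
  have "B \<in> restr (trunc C g) S"
    using A(1) B assms(2) unfolding restr_def trunc_def simplicial_complex_def by auto
  then have "min (cx_rank (restr C S)) g \<in> card ` restr (trunc C g) S"
    using B(2) by (metis image_eqI)
  moreover have "card D \<le> min (cx_rank (restr C S)) g" if "D \<in> restr (trunc C g) S" for D
  proof -
    have "D \<in> restr C S" "card D \<le> g" using that by (auto simp: restr_def trunc_def)
    then show ?thesis using fin by (auto simp: cx_rank_def)
  qed
  moreover have "finite (restr (trunc C g) S)"
    by (rule finite_subset[OF _ fin]) (auto simp: restr_def trunc_def)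
  ultimately show ?thesis
    unfolding cx_rank_def by (intro Max_eqI) auto
qed

lemma zeta_upper:
  assumes "S \<subseteq> V" and "S \<noteq> {}"
  shows "ereal (real (card S)) / ereal (real (cx_rank (restr C S))) \<le> zeta V C"
  unfolding zeta_def by (rule SUP_upper) (use assms in auto)

lemma zeta_eqI:
  assumes "\<And>S. S \<subseteq> V \<Longrightarrow> S \<noteq> {} \<Longrightarrow>
      ereal (real (card S)) / ereal (real (cx_rank (restr C S))) \<le> c"
    and "T \<subseteq> V" and "T \<noteq> {}"
    and "ereal (real (card T)) / ereal (real (cx_rank (restr C T))) = c"
  shows "zeta V C = c"
  using zeta_upper[OF assms(2,3), of C] assms(1,4)
  unfolding zeta_def by (intro antisym SUP_least) auto

lemma zeta_real_bound:
  assumes "finite V" and "zeta V C = ereal z" and "S \<subseteq> V" and "S \<noteq> {}"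
  shows "0 < cx_rank (restr C S)"
    and "real (card S) / real (cx_rank (restr C S)) \<le> z"
proof -
  have le: "ereal (real (card S)) / ereal (real (cx_rank (restr C S))) \<le> ereal z"
    using zeta_upper[OF assms(3,4), of C] assms(2) by simp
  have "0 < card S"
    using assms(1,3,4) finite_subset card_gt_0_iff by blast
  then show "0 < cx_rank (restr C S)"
    using le by (cases "cx_rank (restr C S) = 0") auto
  then show "real (card S) / real (cx_rank (restr C S)) \<le> z"
    using le by simp
qed

lemma zeta_pos:
  assumes "finite V" and "V \<noteq> {}" and "zeta V C = ereal z"
  shows "0 < z"
proof -
  have "0 < real (card V) / real (cx_rank (restr C V))"
    using zeta_real_bound(1)[OF assms(1,3) order.refl assms(2)] assms(1,2)
    by (simp add: card_gt_0_iff)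
  then show ?thesis
    using zeta_real_bound(2)[OF assms(1,3) order.refl assms(2)] by linarith
qed

lemma ratio_min_le:
  fixes c n r g z :: real
  assumes "0 < r" and "0 < g" and "c \<le> n" and "c / r \<le> z" and "g * z \<le> n"
  shows "c / min r g \<le> n / g"
proof (cases "r \<le> g")
  case True
  have "z \<le> n / g" using assms(2,5) by (simp add: field_simps)
  then show ?thesis using True assms(4) by simp
next
  case False
  then show ?thesis using assms(2,3) by (simp add: divide_right_mono)
qed

lemma zeta_trunc:
  assumes "finite V" and "simplicial_complex V C" and "V \<noteq> {}"
    and "zeta V C = ereal z" and "0 < g" and "real g * z \<le> real (card V)"
  shows "zeta V (trunc C g) = ereal (real (card V) / real g)"
proof -
  define r where "r S = cx_rank (restr C S)" for S
  note rank_pos = zeta_real_bound(1)[OF assms(1,4), folded r_def]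
  note ratio_le = zeta_real_bound(2)[OF assms(1,4), folded r_def]
  have rank_trunc: "cx_rank (restr (trunc C g) S) = min (r S) g" if "S \<subseteq> V" for S
    using cx_rank_restr_trunc[OF assms(1,2) that] r_def by simp
  have "real g * (real (card V) / real (r V)) \<le> real (card V)"
    using mult_left_mono[OF ratio_le[OF order.refl assms(3)], of "real g"] assms(6) by simp
  then have "g \<le> r V"
    using rank_pos[OF order.refl assms(3)] assms(1,3) by (simp add: field_simps card_gt_0_iff)
  show ?thesis
  proof (rule zeta_eqI[OF _ order.refl assms(3)])
    fix S assume S: "S \<subseteq> V" "S \<noteq> {}"
    have "real (card S) / min (real (r S)) (real g) \<le> real (card V) / real g"
      using card_mono[OF assms(1) S(1)] rank_pos[OF S] ratio_le[OF S] assms(5,6)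
      by (intro ratio_min_le) simp_all
    then show "ereal (real (card S)) / ereal (real (cx_rank (restr (trunc C g) S)))
        \<le> ereal (real (card V) / real g)"
      using rank_trunc[OF S(1)] rank_pos[OF S] assms(5)
      by (subst ereal_divide) (simp_all add: of_nat_min)
  qed (use rank_trunc[OF order.refl] \<open>g \<le> r V\<close> assms(5) in simp)
qed

theorem lemma4p1:
  fixes V :: "'a set" and M :: "'a set set" and g :: nat
  assumes "finite V"
    and "matroid V M"
    and "0 < g"
    and "ereal (real g) \<le> ereal (real (card V)) / zeta V M"
  shows "zeta V (trunc M g) = ereal (real (card V) / real g)"
proof -
  have "ereal (real (card V)) / zeta V M \<noteq> 0"
    using assms(3,4) by auto
  then have "V \<noteq> {}" and "zeta V M \<noteq> \<infinity>"
    by (auto simp: divide_ereal_def)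
  moreover have "0 \<le> zeta V M"
    by (rule order_trans[OF _ zeta_upper[OF order.refl \<open>V \<noteq> {}\<close>]]) simp
  ultimately obtain z where z: "zeta V M = ereal z"
    by (cases "zeta V M") auto
  have "0 < z"
    using zeta_pos[OF assms(1) \<open>V \<noteq> {}\<close> z] .
  then have "real g * z \<le> real (card V)"
    using assms(4) z by (simp add: ereal_le_divide_pos field_simps)
  moreover have "simplicial_complex V M"
    using assms(2) by (simp add: matroid_def)
  ultimately show ?thesis
    by (rule zeta_trunc[OF assms(1) _ \<open>V \<noteq> {}\<close> z assms(3), rotated])
qed

end
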